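(* Let $S=\{s_1<\dots<s_{k_1}\}$ and $T=\{t_1<\dots<t_{k_2}\}$ be nonempty subsets of $\{1,\dots,n-1\}$ with $\max S+\min T\le n$ and $\min S+\max T\le n$, let $D$ be the digraph of $T_n\langle S;T\rangle$ and $d=\gcd\{s+t: s\in S,t\in T\}$. Let $\mathcal{I}_n=\{-n+1,\dots,n-1\}$ and for each positive integer $i$ define $P_i=\{\ell\in\mathcal{I}_n: \ell\equiv is_1\pmod d\}$; $Q_i=\{\sum_{j=1}^{k_1}a_js_j-\sum_{j=1}^{k_2}b_jt_j\in\mathcal{I}_n : a_j,b_j\in\mathbb{Z}_{\ge0},\ \sum_j a_j+\sum_j b_j=i\}$; $R_i$ = the set of $\ell\in\mathcal{I}_n$ such that for all vertices $u,v$ of $D$ with $v-u=\ell$ there is a directed $(u,v)$-walk of length $i$ in $D$. Then there is a positive integer $M$ such that $P_i=Q_i=R_i$ for every integer $i\ge M$.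
   Context: $T_n\langle S;T\rangle$ is the $n\times n$ $(0,1)$-matrix whose $(i,j)$-entry is $1$ iff $j-i\in S$ or $i-j\in T$; its digraph $D$ has vertex set $[n]$ and arc $(i,j)$ iff that entry is $1$. *)

theory Defs
  imports Main
begin

definition toep_arc :: "nat \<Rightarrow> int set \<Rightarrow> int set \<Rightarrow> int \<Rightarrow> int \<Rightarrow> bool" where
  "toep_arc n S T u v \<longleftrightarrow> u \<in> {1..int n} \<and> v \<in> {1..int n} \<and> (v - u \<in> S \<or> u - v \<in> T)"

definition has_walk :: "nat \<Rightarrow> int set \<Rightarrow> int set \<Rightarrow> nat \<Rightarrow> int \<Rightarrow> int \<Rightarrow> bool" where
  "has_walk n S T i u v \<longleftrightarrow>
     (\<exists>w :: nat \<Rightarrow> int. w 0 = u \<and> w i = v \<and> (\<forall>k<i. toep_arc n S T (w k) (w (Suc k))))"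

definition I_set :: "nat \<Rightarrow> int set" where
  "I_set n = {-int n + 1 .. int n - 1}"

definition d_gcd :: "int set \<Rightarrow> int set \<Rightarrow> int" where
  "d_gcd S T = Gcd {s + t | s t. s \<in> S \<and> t \<in> T}"

definition P_set :: "nat \<Rightarrow> int set \<Rightarrow> int set \<Rightarrow> nat \<Rightarrow> int set" where
  "P_set n S T i = {l \<in> I_set n. l mod d_gcd S T = (int i * Min S) mod d_gcd S T}"

definition Q_set :: "nat \<Rightarrow> int set \<Rightarrow> int set \<Rightarrow> nat \<Rightarrow> int set" where
  "Q_set n S T i = {l \<in> I_set n. \<exists>a b :: int \<Rightarrow> nat.
      l = (\<Sum>s\<in>S. int (a s) * s) - (\<Sum>t\<in>T. int (b t) * t) \<and>
      (\<Sum>s\<in>S. a s) + (\<Sum>t\<in>T. b t) = i}"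

definition R_set :: "nat \<Rightarrow> int set \<Rightarrow> int set \<Rightarrow> nat \<Rightarrow> int set" where
  "R_set n S T i = {l \<in> I_set n. \<forall>u v. u \<in> {1..int n} \<longrightarrow> v \<in> {1..int n} \<longrightarrow> v - u = l \<longrightarrow>
      has_walk n S T i u v}"

end

theory Submission
  imports Defs "HOL-Number_Theory.Cong"
begin

(* A walk of length i from u to v uses a_s steps +s and b_t steps -t with \<Sum>a + \<Sum>b = i,
   so R_i \<subseteq> Q_i; since every s is congruent to s_1 and every t to -s_1 modulo d, Q_i \<subseteq> P_i.

   Conversely, if s + t \<le> n for all steps available, the steps of any such combination can be
   ordered greedily so that the walk stays in {1..n}. By the hypotheses this holds for the step
   sets S \<union> {t_1} and {s_1} \<union> T. The Frobenius coin problem shows that long walks of the first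
   kind realise every bounded displacement in the right class modulo g_1 = gcd {s + t_1}, and
   those of the second kind every one modulo g_2 = gcd {s_1 + t}. As gcd g_1 g_2 divides d, a
   Chinese-remainder choice of an intermediate vertex glues two such walks into one of any
   prescribed length i \<ge> M, which gives P_i \<subseteq> R_i. *)

lemma has_walk_0_iff [simp]: "has_walk n S T 0 u v \<longleftrightarrow> u = v"
  unfolding has_walk_def by auto

lemma has_walk_Suc_iff:
  "has_walk n S T (Suc i) u v \<longleftrightarrow> (\<exists>x. toep_arc n S T u x \<and> has_walk n S T i x v)"
proof
  assume "has_walk n S T (Suc i) u v"
  then obtain w where w: "w 0 = u" "w (Suc i) = v" "\<forall>k<Suc i. toep_arc n S T (w k) (w (Suc k))"
    unfolding has_walk_def by blast
  then have "has_walk n S T i (w 1) v"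
    unfolding has_walk_def by (intro exI[of _ "\<lambda>k. w (Suc k)"]) auto
  moreover have "toep_arc n S T u (w 1)" using w by fastforce
  ultimately show "\<exists>x. toep_arc n S T u x \<and> has_walk n S T i x v" by blast
next
  assume "\<exists>x. toep_arc n S T u x \<and> has_walk n S T i x v"
  then obtain x w where "toep_arc n S T u x" "w 0 = x" "w i = v"
      "\<forall>k<i. toep_arc n S T (w k) (w (Suc k))"
    unfolding has_walk_def by blast
  then show "has_walk n S T (Suc i) u v"
    unfolding has_walk_def
    by (intro exI[of _ "\<lambda>k. case k of 0 \<Rightarrow> u | Suc k \<Rightarrow> w k"]) (auto split: nat.split)
qed

lemma has_walk_append:
  "has_walk n S T i u x \<Longrightarrow> has_walk n S T j x v \<Longrightarrow> has_walk n S T (i + j) u v"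
  by (induction i arbitrary: u) (auto simp: has_walk_Suc_iff)

lemma has_walk_mono:
  "has_walk n S T i u v \<Longrightarrow> S \<subseteq> S' \<Longrightarrow> T \<subseteq> T' \<Longrightarrow> has_walk n S' T' i u v"
  unfolding has_walk_def toep_arc_def by blast

lemma has_walk_reflect:
  assumes "has_walk n T S i (int n + 1 - u) (int n + 1 - v)"
  shows "has_walk n S T i u v"
proof -
  obtain w where "w 0 = int n + 1 - u" "w i = int n + 1 - v"
      "\<forall>k<i. toep_arc n T S (w k) (w (Suc k))"
    using assms unfolding has_walk_def by blast
  then show ?thesis
    unfolding has_walk_def toep_arc_def
    by (intro exI[of _ "\<lambda>k. int n + 1 - w k"]) auto
qed

lemma sum_fun_upd_pred:
  fixes f :: "'a \<Rightarrow> nat" and g :: "'a \<Rightarrow> 'b::comm_semiring_1"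
  assumes "finite A" "p \<in> A" "f p = Suc k"
  shows "sum f A = Suc (sum (f(p := k)) A)"
    and "(\<Sum>x\<in>A. of_nat (f x) * g x) = (\<Sum>x\<in>A. of_nat ((f(p := k)) x) * g x) + g p"
proof -
  have "sum f (A - {p}) = sum (f(p := k)) (A - {p})"
    and "(\<Sum>x\<in>A - {p}. of_nat (f x) * g x) = (\<Sum>x\<in>A - {p}. of_nat ((f(p := k)) x) * g x)"
    by (auto intro: sum.cong)
  with assms show "sum f A = Suc (sum (f(p := k)) A)"
    and "(\<Sum>x\<in>A. of_nat (f x) * g x) = (\<Sum>x\<in>A. of_nat ((f(p := k)) x) * g x) + g p"
    by (simp_all add: sum.remove algebra_simps)
qed

lemma member_le_weighted_sum:
  fixes f :: "int \<Rightarrow> nat"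
  assumes "finite A" "\<forall>x\<in>A. 0 \<le> x" "p \<in> A" "0 < f p"
  shows "p \<le> (\<Sum>x\<in>A. int (f x) * x)"
proof -
  have "p \<le> int (f p) * p"
    using assms by (auto simp: mult_le_cancel_right1)
  also have "\<dots> \<le> (\<Sum>x\<in>A. int (f x) * x)"
    using assms by (intro member_le_sum) auto
  finally show ?thesis .
qed

lemma has_walk_displacement:
  assumes "finite S" "finite T" "has_walk n S T i u v"
  shows "\<exists>a b :: int \<Rightarrow> nat. v - u = (\<Sum>s\<in>S. int (a s) * s) - (\<Sum>t\<in>T. int (b t) * t)
           \<and> sum a S + sum b T = i"
  using assms(3)
proof (induction i arbitrary: u)
  case 0
  then show ?case by (intro exI[of _ "\<lambda>_. 0"]) simp
next
  case (Suc i)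
  then obtain x where arc: "toep_arc n S T u x" and "has_walk n S T i x v"
    by (auto simp: has_walk_Suc_iff)
  obtain a b
    where ab: "v - x = (\<Sum>s\<in>S. int (a s) * s) - (\<Sum>t\<in>T. int (b t) * t)" "sum a S + sum b T = i"
    using Suc.IH[OF \<open>has_walk n S T i x v\<close>] by blast
  from arc consider "x - u \<in> S" | "u - x \<in> T" unfolding toep_arc_def by blast
  then show ?case
  proof cases
    case 1
    let ?a = "a(x - u := Suc (a (x - u)))"
    note sums = sum_fun_upd_pred[OF assms(1) 1, of ?a "a (x - u)"]
    show ?thesis
      using ab sums(1) sums(2)[of "\<lambda>s. s"] by (intro exI[of _ ?a] exI[of _ b]) auto
  next
    case 2
    let ?b = "b(u - x := Suc (b (u - x)))"
    note sums = sum_fun_upd_pred[OF assms(2) 2, of ?b "b (u - x)"]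
    show ?thesis
      using ab sums(1) sums(2)[of "\<lambda>t. t"] by (intro exI[of _ a] exI[of _ ?b]) auto
  qed
qed

lemma R_set_subset_Q_set:
  assumes "finite S" "finite T"
  shows "R_set n S T i \<subseteq> Q_set n S T i"
proof
  fix l assume l: "l \<in> R_set n S T i"
  define u where "u = (if 0 \<le> l then 1 else 1 - l)"
  have "u \<in> {1..int n}" "u + l \<in> {1..int n}"
    using l unfolding R_set_def I_set_def u_def by auto
  then have "has_walk n S T i u (u + l)"
    using l unfolding R_set_def by auto
  then show "l \<in> Q_set n S T i"
    using has_walk_displacement[OF assms] l unfolding R_set_def Q_set_def by fastforce
qed

lemma d_gcd_dvd_combination:
  assumes "finite S" "finite T" "s1 \<in> S" "t1 \<in> T"
  shows "d_gcd S T dvd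
    (\<Sum>s\<in>S. int (a s) * s) - (\<Sum>t\<in>T. int (b t) * t) - int (sum a S + sum b T) * s1"
proof -
  have d_dvd: "d_gcd S T dvd s + t" if "s \<in> S" "t \<in> T" for s t
    unfolding d_gcd_def using that by (auto intro: Gcd_dvd)
  have "d_gcd S T dvd (s + t1) - (s1 + t1)" if "s \<in> S" for s
    using that assms by (intro dvd_diff d_dvd)
  then have "d_gcd S T dvd (\<Sum>s\<in>S. int (a s) * (s - s1))"
    by (intro dvd_sum dvd_mult) simp
  moreover have "d_gcd S T dvd (\<Sum>t\<in>T. int (b t) * (s1 + t))"
    using assms by (intro dvd_sum dvd_mult d_dvd)
  ultimately have "d_gcd S T dvd (\<Sum>s\<in>S. int (a s) * (s - s1)) - (\<Sum>t\<in>T. int (b t) * (s1 + t))"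
    by (rule dvd_diff)
  also have "\<dots> = (\<Sum>s\<in>S. int (a s) * s) - (\<Sum>t\<in>T. int (b t) * t) - int (sum a S + sum b T) * s1"
    by (simp add: algebra_simps sum.distrib sum_subtractf sum_distrib_left)
  finally show ?thesis .
qed

lemma Q_set_subset_P_set:
  assumes "finite S" "finite T" "S \<noteq> {}" "T \<noteq> {}"
  shows "Q_set n S T i \<subseteq> P_set n S T i"
proof
  fix l assume "l \<in> Q_set n S T i"
  then obtain a b where "l \<in> I_set n" "l = (\<Sum>s\<in>S. int (a s) * s) - (\<Sum>t\<in>T. int (b t) * t)"
    "sum a S + sum b T = i"
    unfolding Q_set_def by blast
  moreover have "Min S \<in> S" "Min T \<in> T" using assms by simp_all
  ultimately show "l \<in> P_set n S T i"
    using d_gcd_dvd_combination[OF assms(1,2), of "Min S" "Min T" a b]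
    unfolding P_set_def by (simp add: mod_eq_dvd_iff)
qed

(* Greedy ordering of the steps: from u take a pending step +s with u + s \<le> n, or else a
   pending step -t with u - t \<ge> 1. If neither exists, a pending pair s, t would violate
   s + t \<le> n, and pending steps of one sign only would carry v outside {1..n}. *)
lemma has_walk_of_combination:
  assumes "finite S" "finite T" "\<forall>s\<in>S. 0 < s" "\<forall>t\<in>T. 0 < t"
    and short: "\<forall>s\<in>S. \<forall>t\<in>T. s + t \<le> int n"
  shows "u \<in> {1..int n} \<Longrightarrow> v \<in> {1..int n} \<Longrightarrow>
    v - u = (\<Sum>s\<in>S. int (a s) * s) - (\<Sum>t\<in>T. int (b t) * t) \<Longrightarrow>
    has_walk n S T (sum a S + sum b T) u v"
proof (induction "sum a S + sum b T" arbitrary: a b u)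
  case 0
  then show ?case using assms(1,2) by simp
next
  case (Suc N)
  have "(\<exists>p\<in>S. 0 < a p \<and> u + p \<le> int n) \<or> (\<exists>q\<in>T. 0 < b q \<and> 1 \<le> u - q)"
  proof (rule ccontr)
    assume "\<not> ?thesis"
    then have S_blocked: "int n < u + p" if "p \<in> S" "0 < a p" for p
      using that by force
    from \<open>\<not> ?thesis\<close> have T_blocked: "u \<le> q" if "q \<in> T" "0 < b q" for q
      using that by force
    have nonneg: "\<forall>s\<in>S. 0 \<le> s" "\<forall>t\<in>T. 0 \<le> t"
      using assms(3,4) by auto
    show False
    proof (cases "\<exists>q\<in>T. 0 < b q")
      case True
      then obtain q where q: "q \<in> T" "0 < b q" by blast
      have "\<forall>s\<in>S. a s = 0"
        using S_blocked T_blocked[OF q] short q by force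
      then have "v \<le> u - q"
        using Suc.prems(3) member_le_weighted_sum[where f = b, OF assms(2) nonneg(2) q] by auto
      then show False using Suc.prems(2) T_blocked[OF q] by simp
    next
      case False
      then have "sum b T = 0" "\<forall>t\<in>T. b t = 0" by auto
      then obtain p where p: "p \<in> S" "0 < a p"
        using Suc.hyps(2) by (metis add_0_right neq0_conv sum.neutral nat.distinct(1))
      then have "u + p \<le> v"
        using Suc.prems(3) member_le_weighted_sum[where f = a, OF assms(1) nonneg(1) p]
          \<open>\<forall>t\<in>T. b t = 0\<close> by auto
      then show False using Suc.prems(2) S_blocked[OF p] by simp
    qed
  qed
  then show ?case
  proof (elim disjE bexE conjE)
    fix p assume p: "p \<in> S" "0 < a p" "u + p \<le> int n"
    then obtain k where k: "a p = Suc k" using gr0_conv_Suc by blast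
    note sums = sum_fun_upd_pred[where f = a, OF assms(1) p(1) k]
    have "has_walk n S T (sum (a(p := k)) S + sum b T) (u + p) v"
      using Suc.hyps(2) Suc.prems p assms(3) sums(1) sums(2)[of "\<lambda>s. s"]
      by (intro Suc.hyps(1)) auto
    moreover have "toep_arc n S T u (u + p)"
      unfolding toep_arc_def using Suc.prems(1) p assms(3) by auto
    ultimately show ?case using sums(1) by (auto simp: has_walk_Suc_iff)
  next
    fix q assume q: "q \<in> T" "0 < b q" "1 \<le> u - q"
    then obtain k where k: "b q = Suc k" using gr0_conv_Suc by blast
    note sums = sum_fun_upd_pred[where f = b, OF assms(2) q(1) k]
    have "has_walk n S T (sum a S + sum (b(q := k)) T) (u - q) v"
      using Suc.hyps(2) Suc.prems q assms(4) sums(1) sums(2)[of "\<lambda>t. t"]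
      by (intro Suc.hyps(1)) auto
    moreover have "toep_arc n S T u (u - q)"
      unfolding toep_arc_def using Suc.prems(1) q assms(4) by auto
    ultimately show ?case using sums(1) by (auto simp: has_walk_Suc_iff)
  qed
qed

(* Frobenius coin problem. In the induction step the coefficient of the new element y is
   chosen modulo the Gcd g of the old set, so that the remainder is a large multiple of g. *)
lemma eventually_nat_combination:
  fixes f :: "'a \<Rightarrow> int"
  assumes "finite A" "A \<noteq> {}" "\<forall>x\<in>A. 0 < f x"
  shows "\<exists>N. \<forall>m\<ge>N. Gcd (f ` A) dvd m \<longrightarrow> (\<exists>c :: 'a \<Rightarrow> nat. m = (\<Sum>x\<in>A. int (c x) * f x))"
  using assms
proof (induction A rule: finite_ne_induct)
  case (singleton y)
  have "\<exists>c :: 'a \<Rightarrow> nat. m = int (c y) * f y" if "0 \<le> m" "f y dvd m" for m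
  proof -
    obtain k where "m = k * f y" using \<open>f y dvd m\<close> by (metis dvdE mult.commute)
    moreover have "0 \<le> k" using calculation that singleton by (simp add: zero_le_mult_iff)
    ultimately show ?thesis by (intro exI[of _ "\<lambda>_. nat k"]) simp
  qed
  then show ?case by auto
next
  case (insert y A)
  define g where "g = Gcd (f ` A)"
  obtain N where N: "\<forall>m\<ge>N. g dvd m \<longrightarrow> (\<exists>c :: 'a \<Rightarrow> nat. m = (\<Sum>x\<in>A. int (c x) * f x))"
    using insert unfolding g_def by auto
  have "g \<noteq> 0"
    using insert unfolding g_def by (force simp: Gcd_0_iff)
  then have "0 < g" unfolding g_def by (simp add: order_le_neq_trans)
  have "\<exists>c :: 'a \<Rightarrow> nat. m = (\<Sum>x\<in>insert y A. int (c x) * f x)"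
    if m: "N + g * f y \<le> m" "gcd (f y) g dvd m" for m
  proof -
    obtain r where "[f y * r = m] (mod g)" using cong_solve_dvd_int[OF m(2)] by blast
    then have "[f y * (r mod g) = m] (mod g)" by (metis cong_def mod_mult_right_eq)
    then have "g dvd m - (r mod g) * f y" by (simp add: cong_iff_dvd_diff dvd_diff_commute mult.commute)
    moreover have "(r mod g) * f y \<le> g * f y"
      using \<open>0 < g\<close> insert.prems by (intro mult_right_mono) (auto simp: less_imp_le)
    ultimately obtain c where c: "m - (r mod g) * f y = (\<Sum>x\<in>A. int (c x) * f x)"
      using N m(1) by fastforce
    have "(\<Sum>x\<in>A. int ((c(y := nat (r mod g))) x) * f x) = (\<Sum>x\<in>A. int (c x) * f x)"
      using insert.hyps by (intro sum.cong) auto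
    then have "m = (\<Sum>x\<in>insert y A. int ((c(y := nat (r mod g))) x) * f x)"
      using c insert.hyps \<open>0 < g\<close> by simp
    then show ?thesis by blast
  qed
  then show ?case unfolding g_def by auto
qed

(* Write x + j t = \<Sum> a s (s + t); the surplus j - \<Sum> a s becomes the number of steps -t. *)
lemma eventually_balanced_combination:
  fixes S :: "int set" and t B :: int
  assumes "finite S" "S \<noteq> {}" "\<forall>s\<in>S. 0 < s" "0 < t"
  shows "\<exists>M. \<forall>j\<ge>M. \<forall>x. \<bar>x\<bar> \<le> B \<longrightarrow> Gcd ((\<lambda>s. s + t) ` S) dvd x + int j * t \<longrightarrow>
    (\<exists>a c. x = (\<Sum>s\<in>S. int (a s) * s) - int c * t \<and> sum a S + c = j)"
proof -
  have pos: "\<forall>s\<in>S. 0 < s + t" using assms(3,4) by auto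
  obtain N where N: "\<forall>m\<ge>N. Gcd ((\<lambda>s. s + t) ` S) dvd m \<longrightarrow>
      (\<exists>c :: int \<Rightarrow> nat. m = (\<Sum>s\<in>S. int (c s) * (s + t)))"
    using eventually_nat_combination[OF assms(1,2) pos] by blast
  have "\<exists>a c. x = (\<Sum>s\<in>S. int (a s) * s) - int c * t \<and> sum a S + c = j"
    if j: "nat (N + B) + nat B \<le> j" and x: "\<bar>x\<bar> \<le> B"
      and dvd: "Gcd ((\<lambda>s. s + t) ` S) dvd x + int j * t" for j x
  proof -
    have "int j \<le> int j * t" using assms(4) by (simp add: mult_le_cancel_left1)
    then obtain a where a: "x + int j * t = (\<Sum>s\<in>S. int (a s) * (s + t))"
      using N dvd j x by fastforce
    have split: "(\<Sum>s\<in>S. int (a s) * (s + t)) = (\<Sum>s\<in>S. int (a s) * s) + int (sum a S) * t"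
      by (simp add: algebra_simps sum.distrib sum_distrib_left)
    have "int (sum a S) * (1 + t) = (\<Sum>s\<in>S. int (a s) * (1 + t))"
      by (simp add: sum_distrib_right)
    also have "\<dots> \<le> x + int j * t"
      unfolding a using assms(3) by (intro sum_mono mult_left_mono) auto
    also have "\<dots> \<le> int j * (1 + t)"
      using j x by (simp add: algebra_simps)
    finally have "sum a S \<le> j"
      using assms(4) by (simp add: mult_le_cancel_right flip: of_nat_sum)
    then show ?thesis
      using a split
      by (intro exI[of _ a] exI[of _ "j - sum a S"]) (auto simp: of_nat_diff algebra_simps)
  qed
  then show ?thesis by blast
qed

lemma eventually_has_walk_mod_Gcd:
  assumes "finite S" "S \<noteq> {}" "\<forall>s\<in>S. 0 < s" "t \<in> T" "0 < t" "\<forall>s\<in>S. s + t \<le> int n"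
  shows "\<exists>M. \<forall>j\<ge>M. \<forall>u\<in>{1..int n}. \<forall>w\<in>{1..int n}.
    Gcd ((\<lambda>s. s + t) ` S) dvd w - u + int j * t \<longrightarrow> has_walk n S T j u w"
proof -
  obtain M where M: "\<forall>j\<ge>M. \<forall>x. \<bar>x\<bar> \<le> int n \<longrightarrow> Gcd ((\<lambda>s. s + t) ` S) dvd x + int j * t \<longrightarrow>
      (\<exists>a c. x = (\<Sum>s\<in>S. int (a s) * s) - int c * t \<and> sum a S + c = j)"
    using eventually_balanced_combination[OF assms(1-3,5)] by blast
  have "has_walk n S T j u w"
    if j: "M \<le> j" and uw: "u \<in> {1..int n}" "w \<in> {1..int n}"
      and dvd: "Gcd ((\<lambda>s. s + t) ` S) dvd w - u + int j * t"
    for j u w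
  proof -
    have "\<bar>w - u\<bar> \<le> int n" using uw by auto
    obtain a c where ac: "w - u = (\<Sum>s\<in>S. int (a s) * s) - int c * t" "sum a S + c = j"
      using M j dvd \<open>\<bar>w - u\<bar> \<le> int n\<close> by blast
    have "has_walk n S {t} (sum a S + sum (\<lambda>_. c) {t}) u w"
      using assms uw ac(1) by (intro has_walk_of_combination) auto
    then show ?thesis
      using ac(2) assms(4) by (auto elim: has_walk_mono)
  qed
  then show ?thesis by blast
qed

lemma eventually_has_walk_mod_Gcd_mirror:
  assumes "finite T" "T \<noteq> {}" "\<forall>t\<in>T. 0 < t" "s \<in> S" "0 < s" "\<forall>t\<in>T. s + t \<le> int n"
  shows "\<exists>M. \<forall>j\<ge>M. \<forall>w\<in>{1..int n}. \<forall>v\<in>{1..int n}.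
    Gcd ((\<lambda>t. t + s) ` T) dvd v - w - int j * s \<longrightarrow> has_walk n S T j w v"
proof -
  have "\<forall>t\<in>T. t + s \<le> int n" using assms(6) by (simp add: add.commute)
  then obtain M where M: "\<forall>j\<ge>M. \<forall>u\<in>{1..int n}. \<forall>w\<in>{1..int n}.
      Gcd ((\<lambda>t. t + s) ` T) dvd w - u + int j * s \<longrightarrow> has_walk n T S j u w"
    using eventually_has_walk_mod_Gcd[OF assms(1-5)] by blast
  have "has_walk n S T j w v"
    if "M \<le> j" "w \<in> {1..int n}" "v \<in> {1..int n}" "Gcd ((\<lambda>t. t + s) ` T) dvd v - w - int j * s"
    for j w v
  proof (rule has_walk_reflect)
    have "Gcd ((\<lambda>t. t + s) ` T) dvd (int n + 1 - v) - (int n + 1 - w) + int j * s"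
      using that(4) by (simp add: dvd_diff_commute algebra_simps)
    then show "has_walk n T S j (int n + 1 - w) (int n + 1 - v)"
      using M that by auto
  qed
  then show ?thesis by blast
qed

lemma gcd_dvd_d_gcd:
  assumes "s1 \<in> S" "t1 \<in> T"
  shows "gcd (Gcd ((\<lambda>s. s + t1) ` S)) (Gcd ((\<lambda>t. t + s1) ` T)) dvd d_gcd S T"
  unfolding d_gcd_def
proof (rule Gcd_greatest, clarify)
  fix s t assume "s \<in> S" "t \<in> T"
  let ?g = "gcd (Gcd ((\<lambda>s. s + t1) ` S)) (Gcd ((\<lambda>t. t + s1) ` T))"
  have shifted_S: "?g dvd s' + t1" if "s' \<in> S" for s'
    using that by (meson Gcd_dvd dvd_trans gcd_dvd1 image_eqI)
  have "?g dvd t + s1"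
    using \<open>t \<in> T\<close> by (meson Gcd_dvd dvd_trans gcd_dvd2 image_eqI)
  then have "?g dvd (s + t1) + (t + s1) - (s1 + t1)"
    using dvd_diff[OF dvd_add[OF shifted_S[OF \<open>s \<in> S\<close>]] shifted_S[OF assms(1)]] by blast
  then show "?g dvd s + t" by (simp add: algebra_simps)
qed

lemma chinese_remainder_below:
  fixes g1 g2 L b :: int
  assumes "0 < g1" "0 < g2" "gcd g1 g2 dvd L"
  shows "\<exists>c. g1 dvd c \<and> g2 dvd L - c \<and> b - g1 * g2 \<le> c \<and> c < b"
proof -
  obtain x where "[g1 * x = L] (mod g2)" using cong_solve_dvd_int[OF assms(3)] by blast
  then have "g2 dvd L - g1 * x" by (simp add: cong_iff_dvd_diff dvd_diff_commute)
  define c where "c = g1 * x - g1 * g2 * ((g1 * x - b) div (g1 * g2) + 1)"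
  have "c - b = (g1 * x - b) mod (g1 * g2) - g1 * g2"
    unfolding c_def by (simp add: minus_div_mult_eq_mod[symmetric] algebra_simps)
  moreover have "0 \<le> (g1 * x - b) mod (g1 * g2)" "(g1 * x - b) mod (g1 * g2) < g1 * g2"
    using assms(1,2) by simp_all
  moreover have "g1 dvd c" unfolding c_def by simp
  moreover have "g2 dvd (L - g1 * x) + g2 * (g1 * ((g1 * x - b) div (g1 * g2) + 1))"
    using \<open>g2 dvd L - g1 * x\<close> by simp
  then have "g2 dvd L - c"
    unfolding c_def by (simp add: algebra_simps)
  ultimately show ?thesis by (intro exI[of _ c]) auto
qed

lemma exists_multiple_shift_into_interval:
  fixes y s :: int
  assumes "0 < s"
  shows "\<exists>q. 1 \<le> y + q * s \<and> y + q * s \<le> s"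
proof -
  have "s - y = (s - y) div s * s + (s - y) mod s" by (rule div_mult_mod_eq[symmetric])
  moreover have "0 \<le> (s - y) mod s" "(s - y) mod s < s" using assms by simp_all
  ultimately show ?thesis by (intro exI[of _ "(s - y) div s"]) linarith
qed

(* The walk passes through w = u + c + q s1 \<in> {1..s1}: q steps from u to w of the first kind,
   then i - q steps of the second kind. The window for c forces MA \<le> q and q + MB \<le> i. *)
lemma has_walk_two_phase:
  fixes c K :: int
  assumes MA: "\<forall>j\<ge>MA. \<forall>u\<in>{1..int n}. \<forall>w\<in>{1..int n}.
      g1 dvd w - u + int j * t1 \<longrightarrow> has_walk n S T j u w"
    and MB: "\<forall>j\<ge>MB. \<forall>w\<in>{1..int n}. \<forall>v\<in>{1..int n}.
      g2 dvd v - w - int j * s1 \<longrightarrow> has_walk n S T j w v"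
    and "g1 dvd s1 + t1" "0 < s1" "s1 < int n"
    and c: "g1 dvd c" "g2 dvd (v - u - int i * s1) - c"
      "c < - (int n + int MA * s1)" "- (int n + int MA * s1) - K \<le> c"
    and i: "nat (s1 + int n + int MA * s1 + K) + MB \<le> i"
    and uv: "u \<in> {1..int n}" "v \<in> {1..int n}"
  shows "has_walk n S T i u v"
proof -
  obtain q where q: "1 \<le> u + c + q * s1" "u + c + q * s1 \<le> s1"
    using exists_multiple_shift_into_interval[OF assms(4)] by blast
  define w where "w = u + c + q * s1"
  have "int MA * s1 < q * s1"
    using q(1) c(3) uv(1) by simp
  then have "int MA < q" using assms(4) by simp
  then have "q \<le> q * s1" using assms(4) by (simp add: mult_le_cancel_left1)
  then have "q \<le> s1 + int n + int MA * s1 + K"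
    using q(2) c(4) uv(1) unfolding atLeastAtMost_iff by linarith
  with \<open>int MA < q\<close> i have q_bounds: "MA \<le> nat q" "nat q + MB \<le> i"
    by auto
  have w: "w \<in> {1..int n}" using q assms(5) unfolding w_def by simp
  have "w - u + int (nat q) * t1 = c + q * (s1 + t1)"
    using \<open>int MA < q\<close> unfolding w_def by (simp add: algebra_simps)
  then have "g1 dvd w - u + int (nat q) * t1"
    using c(1) assms(3) by simp
  then have first: "has_walk n S T (nat q) u w"
    using MA q_bounds(1) uv(1) w by blast
  have "v - w - int (i - nat q) * s1 = (v - u - int i * s1) - c"
    using q_bounds(2) \<open>int MA < q\<close> unfolding w_def by (simp add: of_nat_diff algebra_simps)
  then have "g2 dvd v - w - int (i - nat q) * s1"
    using c(2) by (simp only:)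
  moreover have "MB \<le> i - nat q" using q_bounds(2) by simp
  ultimately have "has_walk n S T (i - nat q) w v"
    using MB uv(2) w by blast
  from has_walk_append[OF first this] show ?thesis using q_bounds(2) by simp
qed

lemma eventually_P_set_subset_R_set:
  assumes "S \<noteq> {}" "T \<noteq> {}" "S \<subseteq> {1..int n - 1}" "T \<subseteq> {1..int n - 1}"
    and "Max S + Min T \<le> int n" "Min S + Max T \<le> int n"
  shows "\<exists>M. \<forall>i\<ge>M. P_set n S T i \<subseteq> R_set n S T i"
proof -
  define s1 t1 where "s1 = Min S" and "t1 = Min T"
  have fin: "finite S" "finite T"
    using assms(3,4) finite_subset by auto
  have pos: "\<forall>s\<in>S. 0 < s" "\<forall>t\<in>T. 0 < t"
    using assms(3,4) by auto
  have "s1 \<in> S" "t1 \<in> T"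
    using fin assms(1,2) unfolding s1_def t1_def by simp_all
  then have s1: "s1 \<in> S" "0 < s1" "s1 < int n" and t1: "t1 \<in> T" "0 < t1"
    using assms(3,4) by auto
  have short: "\<forall>s\<in>S. s + t1 \<le> int n" "\<forall>t\<in>T. s1 + t \<le> int n"
    using fin unfolding s1_def t1_def
    by (auto intro: order_trans[OF _ assms(5)] order_trans[OF _ assms(6)])
  define g1 g2 where "g1 = Gcd ((\<lambda>s. s + t1) ` S)" and "g2 = Gcd ((\<lambda>t. t + s1) ` T)"
  obtain MA where MA: "\<forall>j\<ge>MA. \<forall>u\<in>{1..int n}. \<forall>w\<in>{1..int n}.
      g1 dvd w - u + int j * t1 \<longrightarrow> has_walk n S T j u w"
    using eventually_has_walk_mod_Gcd[OF fin(1) assms(1) pos(1) t1(1,2) short(1)]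
    unfolding g1_def by blast
  obtain MB where MB: "\<forall>j\<ge>MB. \<forall>w\<in>{1..int n}. \<forall>v\<in>{1..int n}.
      g2 dvd v - w - int j * s1 \<longrightarrow> has_walk n S T j w v"
    using eventually_has_walk_mod_Gcd_mirror[OF fin(2) assms(2) pos(2) s1(1,2) short(2)]
    unfolding g2_def by blast
  have g1_dvd: "g1 dvd s1 + t1" and g2_dvd: "g2 dvd t1 + s1"
    using s1 t1 unfolding g1_def g2_def by (auto intro: Gcd_dvd)
  then have "0 < g1" "0 < g2"
    using s1(2) t1(2) unfolding g1_def g2_def
    by (metis Gcd_int_greater_eq_0 add_pos_pos dvd_0_left less_le)+
  have "P_set n S T i \<subseteq> R_set n S T i"
    if i: "nat (s1 + int n + int MA * s1 + g1 * g2) + MB \<le> i" for i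
  proof
    fix l assume l: "l \<in> P_set n S T i"
    then have "d_gcd S T dvd l - int i * s1"
      unfolding P_set_def s1_def by (simp add: mod_eq_dvd_iff)
    then have "gcd g1 g2 dvd l - int i * s1"
      using gcd_dvd_d_gcd[OF s1(1) t1(1)] unfolding g1_def g2_def by (rule dvd_trans[rotated])
    then obtain c where "g1 dvd c" "g2 dvd (l - int i * s1) - c"
      "- (int n + int MA * s1) - g1 * g2 \<le> c" "c < - (int n + int MA * s1)"
      using chinese_remainder_below[OF \<open>0 < g1\<close> \<open>0 < g2\<close>] by blast
    then have "has_walk n S T i u v" if "u \<in> {1..int n}" "v \<in> {1..int n}" "v - u = l" for u v
      using has_walk_two_phase[OF MA MB g1_dvd s1(2,3)] i that by blast
    then show "l \<in> R_set n S T i" using l unfolding R_set_def P_set_def by auto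
  qed
  then show ?thesis by blast
qed

theorem theorem2p9:
  fixes n :: nat and S T :: "int set"
  assumes "S \<noteq> {}" and "T \<noteq> {}"
    and "S \<subseteq> {1..int n - 1}" and "T \<subseteq> {1..int n - 1}"
    and "Max S + Min T \<le> int n" and "Min S + Max T \<le> int n"
  shows "\<exists>M::nat. M > 0 \<and> (\<forall>i\<ge>M. P_set n S T i = Q_set n S T i \<and> Q_set n S T i = R_set n S T i)"
proof -
  have fin: "finite S" "finite T"
    using assms(3,4) finite_subset by auto
  obtain M where "\<forall>i\<ge>M. P_set n S T i \<subseteq> R_set n S T i"
    using eventually_P_set_subset_R_set[OF assms] by blast
  moreover have "R_set n S T i \<subseteq> Q_set n S T i" "Q_set n S T i \<subseteq> P_set n S T i" for i
    using R_set_subset_Q_set[OF fin] Q_set_subset_P_set[OF fin assms(1,2)] by blast+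
  ultimately have "\<forall>i\<ge>M. P_set n S T i = Q_set n S T i \<and> Q_set n S T i = R_set n S T i"
    by blast
  then show ?thesis by (intro exI[of _ "Suc M"]) auto
qed

end
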